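(* Let $S$ be a group, $N\triangleleft S$ a proper normal subgroup, $B$ any left $S$-act and $I$ a set with $|I|\ge1$. Then $B\amalg\overline{N}^{(\ast)I}$ is geometrically equivalent to $B\amalg\overline{N}$, and $\overline{N}^{(\ast)I}$ is geometrically equivalent to $\overline{N}$.
   Context: A left $S$-act is a nonempty set with an action $S\times A\to A$ satisfying $1a=a$, $(st)a=s(ta)$; homomorphisms preserve the action; $\amalg$ denotes coproduct (disjoint union), and $A^{(\ast)I}=\coprod_{i\in I}A_i$ with each $A_i=A$. For a subgroup $K$ of $S$, $\overline{K}=S/K$ is the $S$-act of left cosets with $s\cdot tK=stK$. For a nonempty finite set $X$, $F_X=\coprod_{x\in X}S_x$ is the free $S$-act on $X$. For an $S$-act $G$ and a relation $T\subseteq F_X\times F_X$, $T'_G=\{\mu:F_X\to G \text{ homomorphism}: T\subseteq\ker\mu\}$ and $T''_G=\bigcap_{\mu\in T'_G}\ker\mu$ (empty intersection $=F_X\times F_X$). $S$-acts $G_1,G_2$ are geometrically equivalent iff $T''_{G_1}=T''_{G_2}$ for all nonempty finite $X$ and all $T\subseteq F_X\times F_X$. *)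

theory Defs
  imports "HOL-Algebra.Left_Coset"
begin

definition is_act :: "('g,'m) monoid_scheme \<Rightarrow> 'a set \<Rightarrow> ('g \<Rightarrow> 'a \<Rightarrow> 'a) \<Rightarrow> bool" where
  "is_act S A f \<longleftrightarrow> A \<noteq> {}
     \<and> (\<forall>s\<in>carrier S. \<forall>a\<in>A. f s a \<in> A)
     \<and> (\<forall>a\<in>A. f \<one>\<^bsub>S\<^esub> a = a)
     \<and> (\<forall>s\<in>carrier S. \<forall>t\<in>carrier S. \<forall>a\<in>A. f (s \<otimes>\<^bsub>S\<^esub> t) a = f s (f t a))"

definition is_act_hom :: "('g,'m) monoid_scheme \<Rightarrow> 'a set \<Rightarrow> ('g \<Rightarrow> 'a \<Rightarrow> 'a)
     \<Rightarrow> 'b set \<Rightarrow> ('g \<Rightarrow> 'b \<Rightarrow> 'b) \<Rightarrow> ('a \<Rightarrow> 'b) \<Rightarrow> bool" where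
  "is_act_hom S A f B g h \<longleftrightarrow> (\<forall>a\<in>A. h a \<in> B) \<and> (\<forall>s\<in>carrier S. \<forall>a\<in>A. h (f s a) = g s (h a))"

definition coprod_carrier :: "'a set \<Rightarrow> 'b set \<Rightarrow> ('a + 'b) set" where
  "coprod_carrier A B = A <+> B"

definition coprod_act :: "('g \<Rightarrow> 'a \<Rightarrow> 'a) \<Rightarrow> ('g \<Rightarrow> 'b \<Rightarrow> 'b) \<Rightarrow> 'g \<Rightarrow> 'a + 'b \<Rightarrow> 'a + 'b" where
  "coprod_act f g s = map_sum (f s) (g s)"

text \<open>Copower A^{(*)I} = coproduct of copies A_i (i \<in> I) of A, realised as I \<times> A.\<close>
definition copower_carrier :: "'i set \<Rightarrow> 'a set \<Rightarrow> ('i \<times> 'a) set" where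
  "copower_carrier I A = I \<times> A"

definition copower_act :: "('g \<Rightarrow> 'a \<Rightarrow> 'a) \<Rightarrow> 'g \<Rightarrow> 'i \<times> 'a \<Rightarrow> 'i \<times> 'a" where
  "copower_act f s p = (fst p, f s (snd p))"

definition coset_carrier :: "('g,'m) monoid_scheme \<Rightarrow> 'g set \<Rightarrow> 'g set set" where
  "coset_carrier S K = lcosets\<^bsub>S\<^esub> K"

definition coset_act :: "('g,'m) monoid_scheme \<Rightarrow> 'g \<Rightarrow> 'g set \<Rightarrow> 'g set" where
  "coset_act S s C = s <#\<^bsub>S\<^esub> C"

text \<open>Free S-act F_X = coproduct of copies S_x (x \<in> X), realised as X \<times> S, acting on the second coordinate.\<close>
definition free_carrier :: "('g,'m) monoid_scheme \<Rightarrow> 'x set \<Rightarrow> ('x \<times> 'g) set" where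
  "free_carrier S X = X \<times> carrier S"

definition free_act :: "('g,'m) monoid_scheme \<Rightarrow> 'g \<Rightarrow> 'x \<times> 'g \<Rightarrow> 'x \<times> 'g" where
  "free_act S s p = (fst p, s \<otimes>\<^bsub>S\<^esub> snd p)"

definition act_ker :: "('g,'m) monoid_scheme \<Rightarrow> 'x set \<Rightarrow> ('x \<times> 'g \<Rightarrow> 'a) \<Rightarrow> (('x \<times> 'g) \<times> ('x \<times> 'g)) set" where
  "act_ker S X \<mu> = {(u, v). u \<in> free_carrier S X \<and> v \<in> free_carrier S X \<and> \<mu> u = \<mu> v}"

definition T_prime :: "('g,'m) monoid_scheme \<Rightarrow> 'x set \<Rightarrow> (('x \<times> 'g) \<times> ('x \<times> 'g)) set
     \<Rightarrow> 'a set \<Rightarrow> ('g \<Rightarrow> 'a \<Rightarrow> 'a) \<Rightarrow> ('x \<times> 'g \<Rightarrow> 'a) set" where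
  "T_prime S X T G g = {\<mu>. is_act_hom S (free_carrier S X) (free_act S) G g \<mu> \<and> T \<subseteq> act_ker S X \<mu>}"

text \<open>T''_G: intersection of the kernels; the empty intersection is F_X \<times> F_X.\<close>
definition T_dprime :: "('g,'m) monoid_scheme \<Rightarrow> 'x set \<Rightarrow> (('x \<times> 'g) \<times> ('x \<times> 'g)) set
     \<Rightarrow> 'a set \<Rightarrow> ('g \<Rightarrow> 'a \<Rightarrow> 'a) \<Rightarrow> (('x \<times> 'g) \<times> ('x \<times> 'g)) set" where
  "T_dprime S X T G g = (free_carrier S X \<times> free_carrier S X) \<inter> (\<Inter>\<mu>\<in>T_prime S X T G g. act_ker S X \<mu>)"

text \<open>Geometric equivalence; finite sets X of variables are taken inside nat (w.l.o.g.).\<close>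
definition geom_equiv :: "('g,'m) monoid_scheme \<Rightarrow> 'a set \<Rightarrow> ('g \<Rightarrow> 'a \<Rightarrow> 'a)
     \<Rightarrow> 'b set \<Rightarrow> ('g \<Rightarrow> 'b \<Rightarrow> 'b) \<Rightarrow> bool" where
  "geom_equiv S G1 g1 G2 g2 \<longleftrightarrow>
     (\<forall>X :: nat set. \<forall>T. finite X \<and> X \<noteq> {} \<and> T \<subseteq> free_carrier S X \<times> free_carrier S X
        \<longrightarrow> T_dprime S X T G1 g1 = T_dprime S X T G2 g2)"

end

theory Submission
  imports Defs
begin

text \<open>If each act is separated by homomorphisms into the other, then the kernel of any
  homomorphism F_X \<rightarrow> G2 killing T is an intersection of kernels of composites
  F_X \<rightarrow> G2 \<rightarrow> G1 killing T, so the two closures T'' coincide. The coset act S/N embeds into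
  the copower of I copies of S/N as one copy; conversely, points of the copower are separated
  by the maps that are the identity on one copy and right translation C \<mapsto> C g on the others.
  These commute with the action since N is normal, and translation by g \<notin> N moves every coset.
  Both separations survive adding a summand B.\<close>

definition separated_by_homs :: "('g,'m) monoid_scheme \<Rightarrow> 'a set \<Rightarrow> ('g \<Rightarrow> 'a \<Rightarrow> 'a)
     \<Rightarrow> 'b set \<Rightarrow> ('g \<Rightarrow> 'b \<Rightarrow> 'b) \<Rightarrow> bool" where
  "separated_by_homs S A f B g \<longleftrightarrow>
     (\<forall>a\<in>A. \<forall>b\<in>A. a \<noteq> b \<longrightarrow> (\<exists>\<phi>. is_act_hom S A f B g \<phi> \<and> \<phi> a \<noteq> \<phi> b))"

lemma is_act_hom_comp:
  "is_act_hom S A f B g h \<Longrightarrow> is_act_hom S B g C k \<phi> \<Longrightarrow> is_act_hom S A f C k (\<phi> \<circ> h)"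
  unfolding is_act_hom_def by auto

lemma T_dprime_subset_if_separated:
  assumes sep: "separated_by_homs S G2 g2 G1 g1"
  shows "T_dprime S X T G1 g1 \<subseteq> T_dprime S X T G2 g2"
proof safe
  fix u v assume uv: "(u, v) \<in> T_dprime S X T G1 g1"
  then have F: "u \<in> free_carrier S X" "v \<in> free_carrier S X"
    unfolding T_dprime_def by auto
  have "\<nu> u = \<nu> v" if \<nu>: "\<nu> \<in> T_prime S X T G2 g2" for \<nu>
  proof (rule ccontr)
    assume ne: "\<nu> u \<noteq> \<nu> v"
    have hom: "is_act_hom S (free_carrier S X) (free_act S) G2 g2 \<nu>"
      and T: "T \<subseteq> act_ker S X \<nu>"
      using \<nu> unfolding T_prime_def by auto
    have "\<nu> u \<in> G2" "\<nu> v \<in> G2" using hom F unfolding is_act_hom_def by auto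
    then obtain \<phi> where \<phi>: "is_act_hom S G2 g2 G1 g1 \<phi>" "\<phi> (\<nu> u) \<noteq> \<phi> (\<nu> v)"
      using sep ne unfolding separated_by_homs_def by blast
    have "\<phi> \<circ> \<nu> \<in> T_prime S X T G1 g1"
      using is_act_hom_comp[OF hom \<phi>(1)] T unfolding T_prime_def act_ker_def by auto
    then have "(\<phi> \<circ> \<nu>) u = (\<phi> \<circ> \<nu>) v"
      using uv unfolding T_dprime_def act_ker_def by auto
    with \<phi>(2) show False by simp
  qed
  with F show "(u, v) \<in> T_dprime S X T G2 g2"
    unfolding T_dprime_def T_prime_def act_ker_def by auto
qed

lemma geom_equivI_separated:
  assumes "separated_by_homs S G1 g1 G2 g2" and "separated_by_homs S G2 g2 G1 g1"
  shows "geom_equiv S G1 g1 G2 g2"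
  unfolding geom_equiv_def
  using T_dprime_subset_if_separated[OF assms(1)] T_dprime_subset_if_separated[OF assms(2)]
  by blast

lemma separated_by_homs_if_inj_hom:
  assumes "is_act_hom S A f B g h" and "inj_on h A"
  shows "separated_by_homs S A f B g"
  using assms unfolding separated_by_homs_def by (meson inj_onD)

lemma is_act_hom_coprod:
  assumes "is_act_hom S A f A' f' h"
  shows "is_act_hom S (coprod_carrier B A) (coprod_act \<beta> f) (coprod_carrier B A') (coprod_act \<beta> f')
           (map_sum id h)"
  using assms unfolding is_act_hom_def coprod_carrier_def coprod_act_def by auto

lemma separated_by_homs_coprod:
  assumes sep: "separated_by_homs S A f A' f'" and hom: "is_act_hom S A f A' f' h"
  shows "separated_by_homs S (coprod_carrier B A) (coprod_act \<beta> f) (coprod_carrier B A') (coprod_act \<beta> f')"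
  unfolding separated_by_homs_def
proof (intro ballI impI)
  fix a b assume a: "a \<in> coprod_carrier B A" and b: "b \<in> coprod_carrier B A" and "a \<noteq> b"
  then have "\<exists>\<phi>. is_act_hom S A f A' f' \<phi> \<and> map_sum id \<phi> a \<noteq> map_sum id \<phi> b"
    using sep hom unfolding separated_by_homs_def coprod_carrier_def
    by (cases a; cases b) auto
  then show "\<exists>\<phi>. is_act_hom S (coprod_carrier B A) (coprod_act \<beta> f)
                   (coprod_carrier B A') (coprod_act \<beta> f') \<phi> \<and> \<phi> a \<noteq> \<phi> b"
    using is_act_hom_coprod by blast
qed

context normal
begin

lemma l_coset_r_coset_eq: "a \<in> carrier G \<Longrightarrow> g \<in> carrier G \<Longrightarrow> (a <# H) #> g = (a \<otimes> g) <# H"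
proof -
  assume a: "a \<in> carrier G" and g: "g \<in> carrier G"
  have "(a <# H) #> g = a <# (H #> g)"
    unfolding l_coset_def r_coset_def using a g by (auto simp: m_assoc)
  also have "\<dots> = a <# (g <# H)" using coset_eq g by simp
  also have "\<dots> = (a \<otimes> g) <# H" using lcos_m_assoc[OF subset a g] .
  finally show ?thesis .
qed

lemma lcosets_subset: "C \<in> lcosets H \<Longrightarrow> C \<subseteq> carrier G"
  unfolding LCOSETS_def using l_coset_subset_G subset by blast

lemma r_coset_lcosets: "C \<in> lcosets H \<Longrightarrow> g \<in> carrier G \<Longrightarrow> C #> g \<in> lcosets H"
  unfolding LCOSETS_def using l_coset_r_coset_eq by auto

lemma l_coset_r_coset_assoc:
  "C \<subseteq> carrier G \<Longrightarrow> s \<in> carrier G \<Longrightarrow> g \<in> carrier G \<Longrightarrow> s <# (C #> g) = (s <# C) #> g"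
  unfolding l_coset_def r_coset_def by (auto simp: m_assoc) (metis m_assoc subsetD)+

lemma r_coset_lcosets_neq:
  assumes C: "C \<in> lcosets H" and g: "g \<in> carrier G" "g \<notin> H"
  shows "C #> g \<noteq> C"
proof
  assume eq: "C #> g = C"
  obtain a where a: "a \<in> carrier G" "C = a <# H" using C unfolding LCOSETS_def by auto
  have "a \<otimes> g \<in> (a \<otimes> g) <# H" using lcos_self a g is_subgroup by simp
  then have "a \<otimes> g \<in> a <# H" using eq a l_coset_r_coset_eq g by simp
  then obtain n where n: "n \<in> H" "a \<otimes> g = a \<otimes> n" unfolding l_coset_def by auto
  then have "g = n" using a g subset by (metis Units_eq Units_l_cancel subsetD)
  with n g show False by simp
qed

end

definition copower_fold :: "('g,'m) monoid_scheme \<Rightarrow> 'i \<Rightarrow> 'g \<Rightarrow> 'i \<times> 'g set \<Rightarrow> 'g set" where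
  "copower_fold S i0 g p = (if fst p = i0 then snd p else snd p #>\<^bsub>S\<^esub> g)"

lemma is_act_hom_copower_fold:
  assumes "N \<lhd> S" "g \<in> carrier S"
  shows "is_act_hom S (copower_carrier I (coset_carrier S N)) (copower_act (coset_act S))
           (coset_carrier S N) (coset_act S) (copower_fold S i0 g)"
  unfolding is_act_hom_def copower_carrier_def copower_act_def coset_carrier_def coset_act_def
    copower_fold_def
  using normal.r_coset_lcosets[OF assms(1) _ assms(2)]
    normal.l_coset_r_coset_assoc[OF assms(1) normal.lcosets_subset[OF assms(1)] _ assms(2)]
  by auto

lemma separated_by_homs_copower_coset:
  assumes S: "group S" and N: "N \<lhd> S" "N \<noteq> carrier S"
  shows "separated_by_homs S (copower_carrier I (coset_carrier S N)) (copower_act (coset_act S))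
           (coset_carrier S N) (coset_act S)"
  unfolding separated_by_homs_def
proof (intro ballI impI)
  fix p q assume p: "p \<in> copower_carrier I (coset_carrier S N)"
    and q: "q \<in> copower_carrier I (coset_carrier S N)" and "p \<noteq> q"
  have sub: "N \<subseteq> carrier S" using N(1) by (simp add: normal_imp_subgroup subgroup.subset)
  obtain g0 where g0: "g0 \<in> carrier S" "g0 \<notin> N" using N(2) sub by blast
  have one: "\<one>\<^bsub>S\<^esub> \<in> carrier S" using S group.is_monoid monoid.one_closed by blast
  have Cq: "snd q \<in> lcosets\<^bsub>S\<^esub> N"
    using q unfolding copower_carrier_def coset_carrier_def by auto
  have "\<exists>g\<in>carrier S. copower_fold S (fst p) g p \<noteq> copower_fold S (fst p) g q"
  proof (cases "fst q = fst p")
    case True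
    with \<open>p \<noteq> q\<close> one show ?thesis unfolding copower_fold_def by (auto simp: prod_eq_iff)
  next
    case False
    show ?thesis
    proof (cases "snd p = snd q")
      case True
      have "snd q #>\<^bsub>S\<^esub> g0 \<noteq> snd q" using normal.r_coset_lcosets_neq[OF N(1) Cq g0] .
      with g0 False True show ?thesis unfolding copower_fold_def by (intro bexI[of _ g0]) auto
    next
      case neq: False
      have "snd q #>\<^bsub>S\<^esub> \<one>\<^bsub>S\<^esub> = snd q"
        using group.coset_mult_one[OF S] normal.lcosets_subset[OF N(1) Cq] by blast
      with one False neq show ?thesis
        unfolding copower_fold_def by (intro bexI[of _ "\<one>\<^bsub>S\<^esub>"]) auto
    qed
  qed
  then obtain g where "g \<in> carrier S" "copower_fold S (fst p) g p \<noteq> copower_fold S (fst p) g q"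
    by blast
  then show "\<exists>\<phi>. is_act_hom S (copower_carrier I (coset_carrier S N)) (copower_act (coset_act S))
                   (coset_carrier S N) (coset_act S) \<phi> \<and> \<phi> p \<noteq> \<phi> q"
    using is_act_hom_copower_fold[OF N(1), of g I "fst p"] by blast
qed

lemma is_act_hom_copower_inj:
  assumes "i \<in> I"
  shows "is_act_hom S A f (copower_carrier I A) (copower_act f) (Pair i)"
  using assms unfolding is_act_hom_def copower_carrier_def copower_act_def by auto

theorem proposition3p16:
  fixes S :: "('g, 'm) monoid_scheme" and N :: "'g set"
    and B :: "'b set" and \<beta> :: "'g \<Rightarrow> 'b \<Rightarrow> 'b" and I :: "'i set"
  assumes "group S" and "N \<lhd> S" and "N \<noteq> carrier S"
    and "is_act S B \<beta>" and "I \<noteq> {}"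
  shows "geom_equiv S
           (coprod_carrier B (copower_carrier I (coset_carrier S N)))
           (coprod_act \<beta> (copower_act (coset_act S)))
           (coprod_carrier B (coset_carrier S N))
           (coprod_act \<beta> (coset_act S))
       \<and> geom_equiv S
           (copower_carrier I (coset_carrier S N)) (copower_act (coset_act S))
           (coset_carrier S N) (coset_act S)"
proof -
  obtain i where i: "i \<in> I" using assms(5) by blast
  have one: "\<one>\<^bsub>S\<^esub> \<in> carrier S" using assms(1) by (simp add: group.is_monoid monoid.one_closed)
  note fold = is_act_hom_copower_fold[OF assms(2) one, of I i]
    and sep_fold = separated_by_homs_copower_coset[OF assms(1-3), of I]
    and inj = is_act_hom_copower_inj[OF i, of S "coset_carrier S N" "coset_act S"]
  have sep_inj: "separated_by_homs S (coset_carrier S N) (coset_act S)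
      (copower_carrier I (coset_carrier S N)) (copower_act (coset_act S))"
    using separated_by_homs_if_inj_hom[OF inj] by (simp add: inj_on_def)
  show ?thesis
    using geom_equivI_separated[OF sep_fold sep_inj]
      geom_equivI_separated[OF separated_by_homs_coprod[OF sep_fold fold]
                               separated_by_homs_coprod[OF sep_inj inj]]
    by blast
qed

end
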